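(* Let $k\in\mathbb{N}$, $G=(g_1,\dots,g_k)\in\mathbb{N}_0^k$ with $g_1>0$, $g\in\langle G\rangle$, and $m\in\mathbb{N}$ with $\gcd(g,m)=1$. Then $G$ is telescopic if and only if $\tau_{g,m}(G)$ is telescopic.
   Context: $\langle G\rangle$ is the set of $\mathbb{N}_0$-linear combinations of the entries of $G$. $G_i=(g_1,\dots,g_i)$, $d_i=\gcd(G_i)$, $c_j=d_{j-1}/d_j$; $G$ is telescopic if $c_jg_j\in\langle G_{j-1}\rangle$ for $2\le j\le k$. For $g\in\langle G\rangle$ and $m\in\mathbb{N}$ with $\gcd(m,g)=1$, $\tau_{g,m}(G)=(mg_1,\dots,mg_k,g)\in\mathbb{N}_0^{k+1}$. *)

theory Defs
  imports Main
begin

text \<open>A sequence G = (g_1,...,g_k) of natural numbers is represented as a list of length k;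
  the entry g_i is G ! (i - 1).\<close>

definition semigrp :: "nat list \<Rightarrow> nat set" where
  "semigrp G = {(\<Sum>i<length G. a i * G ! i) | a. True}"

definition dgcd :: "nat list \<Rightarrow> nat \<Rightarrow> nat" where
  "dgcd G i = Gcd (set (take i G))"

definition cfac :: "nat list \<Rightarrow> nat \<Rightarrow> nat" where
  "cfac G j = dgcd G (j - 1) div dgcd G j"

definition telescopic :: "nat list \<Rightarrow> bool" where
  "telescopic G \<longleftrightarrow>
     (\<forall>j. 2 \<le> j \<and> j \<le> length G \<longrightarrow> cfac G j * G ! (j - 1) \<in> semigrp (take (j - 1) G))"

definition tau :: "nat \<Rightarrow> nat \<Rightarrow> nat list \<Rightarrow> nat list" where
  "tau g m G = map (\<lambda>x. m * x) G @ [g]"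

end

theory Submission
  imports Defs
begin

text \<open>Scaling every generator by \<open>m\<close> scales the semigroup and all partial gcds by \<open>m\<close>, so it leaves
  the \<open>c\<^sub>j\<close> and the telescopic conditions unchanged. For the appended generator \<open>g\<close>, the
  gcd \<open>d\<close> of \<open>G\<close> divides \<open>g\<close> and \<open>g\<close> is coprime to \<open>m\<close>, so \<open>gcd (m d) g = d\<close> and \<open>c\<^sub>k\<^sub>+\<^sub>1 = m\<close>;
  the last condition \<open>m g \<in> \<langle>m G\<rangle>\<close> is then just \<open>g \<in> \<langle>G\<rangle>\<close>.\<close>

lemma semigrp_map_mult_iff:
  assumes "m > 0"
  shows "m * x \<in> semigrp (map ((*) m) L) \<longleftrightarrow> x \<in> semigrp L"
proof -
  have scaled: "(\<Sum>i<length L. a i * (m * L ! i)) = m * (\<Sum>i<length L. a i * L ! i)" for a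
    by (simp add: sum_distrib_left mult.left_commute)
  show ?thesis
    using assms unfolding semigrp_def by (simp add: scaled)
qed

lemma dgcd_map_mult: "dgcd (map ((*) m) L) i = m * dgcd L i"
proof -
  have "set (take i (map ((*) m) L)) = (*) m ` set (take i L)"
    by (simp add: take_map)
  then show ?thesis
    by (simp add: dgcd_def Gcd_mult)
qed

lemma cfac_map_mult:
  assumes "m > 0"
  shows "cfac (map ((*) m) L) j = cfac L j"
  using assms by (simp add: cfac_def dgcd_map_mult)

lemma telescopic_map_mult_iff:
  assumes "m > 0"
  shows "telescopic (map ((*) m) L) \<longleftrightarrow> telescopic L"
proof -
  have "cfac (map ((*) m) L) j * map ((*) m) L ! (j - 1) \<in> semigrp (take (j - 1) (map ((*) m) L))
      \<longleftrightarrow> cfac L j * L ! (j - 1) \<in> semigrp (take (j - 1) L)"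
    if "2 \<le> j" "j \<le> length L" for j
    using that semigrp_map_mult_iff[OF assms, of "cfac L j * L ! (j - 1)" "take (j - 1) L"]
    by (simp add: cfac_map_mult[OF assms] take_map mult.left_commute)
  then show ?thesis
    unfolding telescopic_def by auto
qed

lemma cfac_append:
  assumes "j \<le> length L"
  shows "cfac (L @ xs) j = cfac L j"
  using assms by (simp add: cfac_def dgcd_def)

lemma all_between_Suc_iff:
  fixes n :: nat
  assumes "2 \<le> n + 1"
  shows "(\<forall>j. 2 \<le> j \<and> j \<le> n + 1 \<longrightarrow> Q j)
    \<longleftrightarrow> (\<forall>j. 2 \<le> j \<and> j \<le> n \<longrightarrow> Q j) \<and> Q (n + 1)"
proof
  assume "\<forall>j. 2 \<le> j \<and> j \<le> n + 1 \<longrightarrow> Q j"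
  then show "(\<forall>j. 2 \<le> j \<and> j \<le> n \<longrightarrow> Q j) \<and> Q (n + 1)"
    using assms by simp
next
  assume below: "(\<forall>j. 2 \<le> j \<and> j \<le> n \<longrightarrow> Q j) \<and> Q (n + 1)"
  show "\<forall>j. 2 \<le> j \<and> j \<le> n + 1 \<longrightarrow> Q j"
  proof (intro allI impI)
    fix j
    assume "2 \<le> j \<and> j \<le> n + 1"
    then consider "2 \<le> j \<and> j \<le> n" | "j = n + 1"
      by linarith
    then show "Q j"
      using below by cases auto
  qed
qed

lemma telescopic_snoc_iff:
  "telescopic (L @ [x]) \<longleftrightarrow>
     telescopic L \<and> cfac (L @ [x]) (length L + 1) * x \<in> semigrp L"
proof -
  have prefix_cond: "cfac (L @ [x]) j * (L @ [x]) ! (j - 1) \<in> semigrp (take (j - 1) (L @ [x]))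
      \<longleftrightarrow> cfac L j * L ! (j - 1) \<in> semigrp (take (j - 1) L)"
    if "2 \<le> j" "j \<le> length L" for j
  proof -
    have "j - 1 < length L"
      using that by simp
    then show ?thesis
      using that by (simp add: cfac_append nth_append)
  qed
  have zero_mem: "0 \<in> semigrp []"
    by (simp add: semigrp_def)
  show ?thesis
  proof (cases "L = []")
    case True
    \<comment> \<open>vacuous on both sides: \<open>cfac [x] 1 = Gcd {} div x = 0\<close>\<close>
    then show ?thesis
      by (simp add: telescopic_def cfac_def dgcd_def zero_mem)
  next
    case False
    then have two_le: "2 \<le> length L + 1"
      by (simp add: Suc_le_eq)
    have "telescopic (L @ [x]) \<longleftrightarrow>
        (\<forall>j. 2 \<le> j \<and> j \<le> length L \<longrightarrow>
           cfac (L @ [x]) j * (L @ [x]) ! (j - 1) \<in> semigrp (take (j - 1) (L @ [x])))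
        \<and> cfac (L @ [x]) (length L + 1) * x \<in> semigrp L"
      unfolding telescopic_def length_append_singleton Suc_eq_plus1 all_between_Suc_iff[OF two_le]
      by simp
    also have "\<dots> \<longleftrightarrow> telescopic L \<and> cfac (L @ [x]) (length L + 1) * x \<in> semigrp L"
      unfolding telescopic_def using prefix_cond by auto
    finally show ?thesis .
  qed
qed

lemma Gcd_dvd_semigrp:
  assumes "x \<in> semigrp L"
  shows "Gcd (set L) dvd x"
  using assms by (auto simp: semigrp_def intro!: dvd_sum)

lemma gcd_mult_eq_of_dvd_coprime:
  fixes d g m :: nat
  assumes "d dvd g" and "coprime g m"
  shows "gcd g (m * d) = d"
proof -
  obtain h where g: "g = d * h"
    using assms(1) by blast
  then have "coprime h m"
    using assms(2) by simp
  then show ?thesis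
    by (simp add: g gcd_mult_left mult.commute[of m] coprime_iff_gcd_eq_1)
qed

lemma cfac_tau_last:
  assumes "Gcd (set G) \<noteq> 0" and "g \<in> semigrp G" and "coprime g m"
  shows "cfac (tau g m G) (length G + 1) = m"
proof -
  define d where "d = Gcd (set G)"
  have "gcd g (m * d) = d"
    using gcd_mult_eq_of_dvd_coprime Gcd_dvd_semigrp assms(2,3) d_def by blast
  then have "dgcd (tau g m G) (length G + 1) = d"
    by (simp add: tau_def dgcd_def Gcd_mult d_def image_image)
  moreover have "dgcd (tau g m G) (length G) = m * d"
    by (simp add: tau_def dgcd_def Gcd_mult d_def)
  ultimately show ?thesis
    using assms(1) by (simp add: cfac_def d_def)
qed

theorem mainTheorem12:
  fixes k :: nat and G :: "nat list" and g m :: nat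
  assumes "k \<ge> 1" and "length G = k" and "G ! 0 > 0"
    and "g \<in> semigrp G" and "m \<ge> 1" and "gcd g m = 1"
  shows "telescopic G \<longleftrightarrow> telescopic (tau g m G)"
proof -
  have "m > 0"
    using assms(5) by simp
  have "G ! 0 \<in> set G"
    using assms(1,2) by simp
  then have "Gcd (set G) \<noteq> 0"
    using assms(3) by auto
  then have "cfac (tau g m G) (length G + 1) = m"
    using cfac_tau_last assms(4,6) coprime_iff_gcd_eq_1 by blast
  then have last_cond: "cfac (tau g m G) (length G + 1) * g \<in> semigrp (map ((*) m) G)"
    using semigrp_map_mult_iff[OF \<open>m > 0\<close>] assms(4) by simp
  have "telescopic (tau g m G) \<longleftrightarrow> telescopic (map ((*) m) G)"
    using telescopic_snoc_iff[of "map ((*) m) G" g] last_cond by (simp add: tau_def)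
  then show ?thesis
    using telescopic_map_mult_iff[OF \<open>m > 0\<close>] by simp
qed

end
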